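(* Let $\mathbb{R}^n$ carry a norm $\|\cdot\|$ with dual norm $\|\cdot\|_*$, let $Q\subseteq\mathbb{R}^n$ be closed and convex, let $f_1,\dots,f_M$ be convex functions on $Q$, differentiable with $\|\nabla f_i(x)-\nabla f_i(y)\|_*\le L\|x-y\|$ for all $x,y\in Q$, and let $h$ be convex on $Q$. Put $f(x)=\max_{i=1,\dots,M}f_i(x)+h(x)$ and assume $f$ attains its minimum over $Q$ at $x_*$. Let $d$ be a prox-function on $Q$ with Bregman divergence $V$, $x_0\in Q$, $V(x_*,x_0)\le R^2$. Run the adaptive mirror triangle method for the minimax problem (described in the context) with starting point $x_0$, an integer $N\ge1$ of steps, and initial constant $L_0$ with $0<L_0\le L$. Then $$f(x_N)-f(x_* )\le\frac{8LR^2}{(N+1)^2}.$$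
   Context: $\|\lambda\|_*=\max_{\|\nu\|\le1}\langle\lambda,\nu\rangle$. A prox-function on $Q$ is a continuously differentiable $d:Q\to\mathbb{R}$, $1$-strongly convex w.r.t. $\|\cdot\|$; $V(x,y)=d(x)-d(y)-\langle\nabla d(y),x-y\rangle$. The adaptive method: set $y_0=u_0=x_0$, $L_1=L_0/2$, $\alpha_0=A_0=0$. Step $k+1$ ($k=0,\dots,N-1$), with current value $L_{k+1}$: (i) let $\alpha_{k+1}$ be the largest root of $A_k+\alpha=L_{k+1}\alpha^2$, and $A_{k+1}=A_k+\alpha_{k+1}$; (ii) $y_{k+1}=(\alpha_{k+1}u_k+A_kx_k)/A_{k+1}$; (iii) $u_{k+1}=\arg\min_{x\in Q}\{V(x,u_k)+\alpha_{k+1}(\max_{j}[f_j(y_{k+1})+\langle\nabla f_j(y_{k+1}),x-y_{k+1}\rangle]+h(x))\}$; (iv) $x_{k+1}=(\alpha_{k+1}u_{k+1}+A_kx_k)/A_{k+1}$; (v) if $f(x_{k+1})\le\max_j\{f_j(y_{k+1})+\langle\nabla f_j(y_{k+1}),x_{k+1}-y_{k+1}\rangle\}+\frac{L_{k+1}}{2}\|x_{k+1}-y_{k+1}\|^2+h(x_{k+1})$, set $L_{k+2}=L_{k+1}/2$ and go to the next step; otherwise replace $L_{k+1}$ by $2L_{k+1}$ and repeat step $k+1$ from (i). *)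

theory Defs
  imports "HOL-Analysis.Analysis"
begin

definition is_norm :: "('a::euclidean_space \<Rightarrow> real) \<Rightarrow> bool" where
  "is_norm nrm \<longleftrightarrow> (\<forall>x. nrm x = 0 \<longleftrightarrow> x = 0) \<and> (\<forall>c x. nrm (c *\<^sub>R x) = \<bar>c\<bar> * nrm x)
     \<and> (\<forall>x y. nrm (x + y) \<le> nrm x + nrm y)"

definition dual_norm :: "('a::euclidean_space \<Rightarrow> real) \<Rightarrow> 'a \<Rightarrow> real" where
  "dual_norm nrm l = Sup ((\<lambda>v. l \<bullet> v) ` {v. nrm v \<le> 1})"

definition prox_function :: "('a::euclidean_space \<Rightarrow> real) \<Rightarrow> 'a set \<Rightarrow> ('a \<Rightarrow> real) \<Rightarrow> ('a \<Rightarrow> 'a) \<Rightarrow> bool" where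
  "prox_function nrm Q d gd \<longleftrightarrow>
     (\<forall>x\<in>Q. (d has_derivative (\<lambda>v. gd x \<bullet> v)) (at x within Q)) \<and> continuous_on Q gd \<and>
     (\<forall>x\<in>Q. \<forall>y\<in>Q. \<forall>t\<in>{0..1}.
        d (t *\<^sub>R x + (1 - t) *\<^sub>R y) \<le> t * d x + (1 - t) * d y - t * (1 - t) / 2 * (nrm (x - y))\<^sup>2)"

definition bregman :: "('a::euclidean_space \<Rightarrow> real) \<Rightarrow> ('a \<Rightarrow> 'a) \<Rightarrow> 'a \<Rightarrow> 'a \<Rightarrow> real" where
  "bregman d gd x y = d x - d y - gd y \<bullet> (x - y)"

definition is_argmin_on :: "'a set \<Rightarrow> ('a \<Rightarrow> real) \<Rightarrow> 'a \<Rightarrow> bool" where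
  "is_argmin_on Q F u \<longleftrightarrow> u \<in> Q \<and> (\<forall>x\<in>Q. F u \<le> F x)"

definition lin_max :: "nat \<Rightarrow> (nat \<Rightarrow> 'a::euclidean_space \<Rightarrow> real) \<Rightarrow> (nat \<Rightarrow> 'a \<Rightarrow> 'a) \<Rightarrow> 'a \<Rightarrow> 'a \<Rightarrow> real" where
  "lin_max M f g y x = Max ((\<lambda>j. f j y + g j y \<bullet> (x - y)) ` {1..M})"

definition obj :: "nat \<Rightarrow> (nat \<Rightarrow> 'a \<Rightarrow> real) \<Rightarrow> ('a \<Rightarrow> real) \<Rightarrow> 'a \<Rightarrow> real" where
  "obj M f h x = Max ((\<lambda>i. f i x) ` {1..M}) + h x"

text \<open>Largest root of A + a = Lt * a^2 (Lt > 0).\<close>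
definition alpha_of :: "real \<Rightarrow> real \<Rightarrow> real" where
  "alpha_of Lt A = (1 + sqrt (1 + 4 * Lt * A)) / (2 * Lt)"

definition mtm_step ::
  "'a::euclidean_space set \<Rightarrow> nat \<Rightarrow> (nat \<Rightarrow> 'a \<Rightarrow> real) \<Rightarrow> (nat \<Rightarrow> 'a \<Rightarrow> 'a) \<Rightarrow> ('a \<Rightarrow> real)
   \<Rightarrow> ('a \<Rightarrow> 'a \<Rightarrow> real) \<Rightarrow> real \<Rightarrow> real \<Rightarrow> 'a \<Rightarrow> 'a
   \<Rightarrow> real \<Rightarrow> real \<Rightarrow> 'a \<Rightarrow> 'a \<Rightarrow> 'a \<Rightarrow> bool" where
  "mtm_step Q M f g h V Lt Ak xk uk a A' y' u' x' \<longleftrightarrow>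
     a = alpha_of Lt Ak \<and> A' = Ak + a \<and>
     y' = (1 / A') *\<^sub>R (a *\<^sub>R uk + Ak *\<^sub>R xk) \<and>
     is_argmin_on Q (\<lambda>z. V z uk + a * (lin_max M f g y' z + h z)) u' \<and>
     x' = (1 / A') *\<^sub>R (a *\<^sub>R u' + Ak *\<^sub>R xk)"

definition mtm_accept ::
  "('a::euclidean_space \<Rightarrow> real) \<Rightarrow> nat \<Rightarrow> (nat \<Rightarrow> 'a \<Rightarrow> real) \<Rightarrow> (nat \<Rightarrow> 'a \<Rightarrow> 'a) \<Rightarrow> ('a \<Rightarrow> real)
   \<Rightarrow> real \<Rightarrow> 'a \<Rightarrow> 'a \<Rightarrow> bool" where
  "mtm_accept nrm M f g h Lt y' x' \<longleftrightarrow>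
     obj M f h x' \<le> lin_max M f g y' x' + Lt / 2 * (nrm (x' - y'))\<^sup>2 + h x'"

text \<open>Lk 0 = L0 and
  Lk (k+1) is the accepted constant of step k+1; the first trial constant of step k+1
  is Lk k / 2 (so L_1 = L0/2, L_{k+2} = L_{k+1}/2), doubled m times until acceptance;
  all earlier trials (j < m) are carried out (minimizer exists) and rejected.\<close>
definition mtm_run ::
  "('a::euclidean_space \<Rightarrow> real) \<Rightarrow> 'a set \<Rightarrow> nat \<Rightarrow> (nat \<Rightarrow> 'a \<Rightarrow> real) \<Rightarrow> (nat \<Rightarrow> 'a \<Rightarrow> 'a)
   \<Rightarrow> ('a \<Rightarrow> real) \<Rightarrow> ('a \<Rightarrow> 'a \<Rightarrow> real) \<Rightarrow> 'a \<Rightarrow> real \<Rightarrow> nat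
   \<Rightarrow> (nat \<Rightarrow> 'a) \<Rightarrow> (nat \<Rightarrow> 'a) \<Rightarrow> (nat \<Rightarrow> 'a) \<Rightarrow> (nat \<Rightarrow> real) \<Rightarrow> (nat \<Rightarrow> real) \<Rightarrow> (nat \<Rightarrow> real)
   \<Rightarrow> bool" where
  "mtm_run nrm Q M f g h V x0 L0 N x y u A alpha Lk \<longleftrightarrow>
     x 0 = x0 \<and> y 0 = x0 \<and> u 0 = x0 \<and> A 0 = 0 \<and> alpha 0 = 0 \<and> Lk 0 = L0 \<and>
     (\<forall>k<N. \<exists>m::nat.
        Lk (Suc k) = Lk k / 2 * 2 ^ m \<and>
        mtm_step Q M f g h V (Lk (Suc k)) (A k) (x k) (u k)
          (alpha (Suc k)) (A (Suc k)) (y (Suc k)) (u (Suc k)) (x (Suc k)) \<and>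
        mtm_accept nrm M f g h (Lk (Suc k)) (y (Suc k)) (x (Suc k)) \<and>
        (\<forall>j<m. (\<exists>a A' y' u' x'. mtm_step Q M f g h V (Lk k / 2 * 2 ^ j) (A k) (x k) (u k) a A' y' u' x') \<and>
               (\<forall>a A' y' u' x'. mtm_step Q M f g h V (Lk k / 2 * 2 ^ j) (A k) (x k) (u k) a A' y' u' x'
                   \<longrightarrow> \<not> mtm_accept nrm M f g h (Lk k / 2 * 2 ^ j) y' x')))"

end

theory Submission
  imports Defs
begin

text \<open>
  The potential \<open>A_k f(x_k) + V(x_*, u_k)\<close> grows by at most \<open>alpha_(k+1) f(x_*)\<close> per
  accepted step: the acceptance test bounds \<open>f(x_(k+1))\<close> by the convex linearised model plus
  \<open>L_(k+1)/2 \<parallel>x_(k+1) - y_(k+1)\<parallel>^2\<close>; convexity of the model splits its value at \<open>x_(k+1)\<close>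
  between \<open>x_k\<close> and \<open>u_(k+1)\<close>; and since \<open>x_(k+1) - y_(k+1) = (alpha_(k+1)/A_(k+1)) (u_(k+1) - u_k)\<close>
  and \<open>L_(k+1) alpha_(k+1)^2 = A_(k+1)\<close>, the quadratic term is at most
  \<open>\<parallel>u_(k+1) - u_k\<parallel>^2 / 2 \<le> V(u_(k+1), u_k)\<close>, which the three-point property of the mirror
  step absorbs. Hence \<open>A_N (f(x_N) - f(x_*)) \<le> V(x_*, x_0) \<le> R^2\<close>.
  By the descent lemma a trial constant \<open>\<ge> L\<close> is always accepted, so backtracking keeps the
  accepted constants below \<open>2L\<close>, and then the recursion for \<open>A_k\<close> gives \<open>A_k \<ge> (k + 1)^2 / (8L)\<close>.
\<close>

section \<open>Norms on Euclidean spaces\<close>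

lemma is_norm_scaleR: "is_norm nrm \<Longrightarrow> nrm (c *\<^sub>R x) = \<bar>c\<bar> * nrm x"
  unfolding is_norm_def by blast

lemma is_norm_triangle: "is_norm nrm \<Longrightarrow> nrm (x + y) \<le> nrm x + nrm y"
  unfolding is_norm_def by blast

lemma is_norm_eq_0_iff: "is_norm nrm \<Longrightarrow> nrm x = 0 \<longleftrightarrow> x = 0"
  unfolding is_norm_def by blast

lemma is_norm_minus_commute: "is_norm nrm \<Longrightarrow> nrm (x - y) = nrm (y - x)"
  using is_norm_scaleR[of nrm "-1" "x - y"] by simp

lemma is_norm_nonneg:
  assumes "is_norm nrm"
  shows "0 \<le> nrm x"
proof -
  have "nrm (x + (-1) *\<^sub>R x) \<le> nrm x + nrm ((-1) *\<^sub>R x)"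
    using is_norm_triangle[OF assms] .
  moreover have "nrm ((-1) *\<^sub>R x) = nrm x"
    using is_norm_scaleR[OF assms, of "-1" x] by simp
  moreover have "nrm (x + (-1) *\<^sub>R x) = 0"
    using is_norm_eq_0_iff[OF assms] by simp
  ultimately show ?thesis by linarith
qed

lemma is_norm_le_sum_Basis:
  assumes "is_norm (nrm :: 'a::euclidean_space \<Rightarrow> real)"
  shows "nrm x \<le> (\<Sum>b\<in>Basis. nrm b) * norm x"
proof -
  have "nrm x = nrm (\<Sum>b\<in>Basis. (x \<bullet> b) *\<^sub>R b)"
    by (simp add: euclidean_representation)
  also have "\<dots> \<le> (\<Sum>b\<in>Basis. nrm ((x \<bullet> b) *\<^sub>R b))"
  proof (induction rule: finite_induct[OF finite_Basis])
    case 1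
    then show ?case using is_norm_eq_0_iff[OF assms, of 0] by simp
  next
    case (2 b F)
    then show ?case
      using is_norm_triangle[OF assms, of "(x \<bullet> b) *\<^sub>R b" "\<Sum>b\<in>F. (x \<bullet> b) *\<^sub>R b"] by simp
  qed
  also have "\<dots> = (\<Sum>b\<in>Basis. \<bar>x \<bullet> b\<bar> * nrm b)"
    using is_norm_scaleR[OF assms] by simp
  also have "\<dots> \<le> (\<Sum>b\<in>Basis. norm x * nrm b)"
    by (intro sum_mono mult_right_mono) (auto simp: Basis_le_norm is_norm_nonneg[OF assms])
  finally show ?thesis by (simp add: sum_distrib_left mult.commute)
qed

lemma continuous_on_is_norm:
  assumes "is_norm (nrm :: 'a::euclidean_space \<Rightarrow> real)"
  shows "continuous_on S nrm"
proof -
  define C where "C = (\<Sum>b\<in>Basis. nrm (b :: 'a))"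
  have "0 \<le> C"
    unfolding C_def by (intro sum_nonneg) (simp add: is_norm_nonneg[OF assms])
  moreover have "\<bar>nrm x - nrm y\<bar> \<le> C * norm (x - y)" for x y
  proof -
    have "nrm x \<le> nrm y + nrm (x - y)" "nrm y \<le> nrm x + nrm (y - x)"
      using is_norm_triangle[OF assms, of y "x - y"] is_norm_triangle[OF assms, of x "y - x"]
      by simp_all
    then show ?thesis
      using is_norm_le_sum_Basis[OF assms, of "x - y"] is_norm_minus_commute[OF assms, of x y]
      unfolding C_def by linarith
  qed
  ultimately have "C-lipschitz_on S nrm"
    by (intro lipschitz_onI) (auto simp: dist_real_def dist_norm)
  then show ?thesis by (rule lipschitz_on_continuous_on)
qed

lemma is_norm_bounded_below:
  assumes "is_norm (nrm :: 'a::euclidean_space \<Rightarrow> real)"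
  obtains c where "0 < c" "\<And>v. c * norm v \<le> nrm v"
proof -
  obtain b :: 'a where "b \<in> Basis" using nonempty_Basis by blast
  then have "sphere (0 :: 'a) 1 \<noteq> {}" by (auto intro!: exI[of _ b])
  then obtain w where w: "w \<in> sphere (0 :: 'a) 1" "\<forall>y\<in>sphere 0 1. nrm w \<le> nrm y"
    using continuous_attains_inf[OF compact_sphere _ continuous_on_is_norm[OF assms]] by blast
  then have "0 < nrm w"
    using is_norm_eq_0_iff[OF assms, of w] is_norm_nonneg[OF assms, of w] by fastforce
  moreover have "nrm w * norm v \<le> nrm v" for v
  proof (cases "v = 0")
    case True
    then show ?thesis using is_norm_nonneg[OF assms, of v] by simp
  next
    case False
    then have "nrm w \<le> nrm ((1 / norm v) *\<^sub>R v)" using w by auto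
    also have "\<dots> = nrm v / norm v" using is_norm_scaleR[OF assms] by simp
    finally show ?thesis using False by (simp add: field_simps)
  qed
  ultimately show ?thesis using that by blast
qed

lemma inner_le_dual_norm:
  assumes "is_norm (nrm :: 'a::euclidean_space \<Rightarrow> real)"
  shows "l \<bullet> v \<le> dual_norm nrm l * nrm v"
proof -
  obtain c where c: "0 < c" "\<And>v. c * norm v \<le> nrm v"
    using is_norm_bounded_below[OF assms] by blast
  have bdd: "bdd_above ((\<lambda>v. l \<bullet> v) ` {v. nrm v \<le> 1})"
  proof (rule bdd_aboveI2)
    fix w assume "w \<in> {v. nrm v \<le> 1}"
    then have "c * norm w \<le> 1" using c(2)[of w] by simp
    then have "norm w \<le> 1 / c" using c(1) by (simp add: field_simps)
    then have "norm l * norm w \<le> norm l * (1 / c)" by (intro mult_left_mono) auto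
    then show "l \<bullet> w \<le> norm l / c" using Cauchy_Schwarz_ineq2[of l w] by simp
  qed
  have le_dual: "l \<bullet> w \<le> dual_norm nrm l" if "nrm w \<le> 1" for w
    unfolding dual_norm_def using that by (intro cSup_upper bdd) auto
  show ?thesis
  proof (cases "v = 0")
    case True
    then show ?thesis using le_dual[of 0] is_norm_eq_0_iff[OF assms, of 0] by simp
  next
    case False
    then have n0: "0 < nrm v"
      using is_norm_eq_0_iff[OF assms, of v] is_norm_nonneg[OF assms, of v] by linarith
    then have "nrm ((1 / nrm v) *\<^sub>R v) \<le> 1"
      using is_norm_scaleR[OF assms, of "1 / nrm v" v] by simp
    then have "l \<bullet> ((1 / nrm v) *\<^sub>R v) \<le> dual_norm nrm l" by (rule le_dual)
    then show ?thesis using n0 by (simp add: field_simps)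
  qed
qed

section \<open>Calculus along segments\<close>

lemma convex_segment_mem:
  assumes "convex Q" "x \<in> Q" "y \<in> Q" "t \<in> {0..1}"
  shows "y + t *\<^sub>R (x - y) \<in> Q"
proof -
  have "y + t *\<^sub>R (x - y) = (1 - t) *\<^sub>R y + t *\<^sub>R x" by (simp add: algebra_simps)
  then show ?thesis using assms convexD_alt[of Q y x t] by auto
qed

lemma has_derivative_along_segment:
  assumes Q: "convex Q" "x \<in> Q" "y \<in> Q" and t: "t \<in> {0..1}"
    and D: "(F has_derivative (\<lambda>v. G \<bullet> v)) (at (y + t *\<^sub>R (x - y)) within Q)"
  shows "((\<lambda>s. F (y + s *\<^sub>R (x - y))) has_derivative (\<lambda>s. s * (G \<bullet> (x - y)))) (at t within {0..1})"
proof -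
  let ?p = "\<lambda>s. y + s *\<^sub>R (x - y)"
  have "(?p has_derivative (\<lambda>s. s *\<^sub>R (x - y))) (at t within {0..1})"
    by (auto intro!: derivative_eq_intros)
  moreover have "?p ` {0..1} \<subseteq> Q" using convex_segment_mem[OF Q] by auto
  then have "(F has_derivative (\<lambda>v. G \<bullet> v)) (at (?p t) within ?p ` {0..1})"
    using has_derivative_subset[OF D] by simp
  ultimately show ?thesis using diff_chain_within by (fastforce simp: o_def)
qed

lemma eventually_at_right_0_unit:
  "(\<And>t. 0 < t \<Longrightarrow> t < 1 \<Longrightarrow> P t) \<Longrightarrow> eventually P (at_right (0::real))"
  using eventually_mono[OF eventually_at_right_real[of 0 1]] by auto

lemma tendsto_difference_quotient_along_segment:
  assumes Q: "convex Q" "x \<in> Q" "y \<in> Q"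
    and D: "(F has_derivative (\<lambda>v. G \<bullet> v)) (at y within Q)"
  shows "((\<lambda>t. (F (y + t *\<^sub>R (x - y)) - F y) / t) \<longlongrightarrow> G \<bullet> (x - y)) (at_right 0)"
proof -
  have "(\<lambda>s. s * (G \<bullet> (x - y))) = (*) (G \<bullet> (x - y))" by (rule ext) simp
  then have "((\<lambda>s. F (y + s *\<^sub>R (x - y))) has_derivative (*) (G \<bullet> (x - y))) (at 0 within {0..1})"
    using has_derivative_along_segment[OF Q, of 0 F G] D by simp
  then have "((\<lambda>s. (F (y + s *\<^sub>R (x - y)) - F y) / (s - 0)) \<longlongrightarrow> G \<bullet> (x - y)) (at 0 within {0..1})"
    unfolding has_field_derivative_def[symmetric] has_field_derivative_iff by simp
  then show ?thesis using at_within_Icc_at_right[of "0::real" 1] by simp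
qed

lemma convex_on_gradient_inequality:
  assumes Q: "x \<in> Q" "y \<in> Q" and cv: "convex_on Q F"
    and D: "(F has_derivative (\<lambda>v. G \<bullet> v)) (at y within Q)"
  shows "F y + G \<bullet> (x - y) \<le> F x"
proof -
  have "\<forall>\<^sub>F t in at_right 0. (F (y + t *\<^sub>R (x - y)) - F y) / t \<le> F x - F y"
  proof (rule eventually_at_right_0_unit)
    fix t :: real assume t: "0 < t" "t < 1"
    have "y + t *\<^sub>R (x - y) = (1 - t) *\<^sub>R y + t *\<^sub>R x" by (simp add: algebra_simps)
    then have "F (y + t *\<^sub>R (x - y)) \<le> (1 - t) * F y + t * F x"
      using convex_onD[OF cv, of t y x] t Q by simp
    then show "(F (y + t *\<^sub>R (x - y)) - F y) / t \<le> F x - F y"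
      using t by (simp add: field_simps)
  qed
  then have "G \<bullet> (x - y) \<le> F x - F y"
    using cv Q D unfolding convex_on_def
    by (intro tendsto_le[OF trivial_limit_at_right_real tendsto_const
          tendsto_difference_quotient_along_segment]) auto
  then show ?thesis by simp
qed

lemma descent_lemma:
  assumes nrm: "is_norm nrm" and cQ: "convex Q" and Q: "x \<in> Q" "y \<in> Q"
    and der: "\<And>z. z \<in> Q \<Longrightarrow> (F has_derivative (\<lambda>v. G z \<bullet> v)) (at z within Q)"
    and lip: "\<And>z. z \<in> Q \<Longrightarrow> dual_norm nrm (G z - G y) \<le> L * nrm (z - y)"
  shows "F x \<le> F y + G y \<bullet> (x - y) + L / 2 * (nrm (x - y))\<^sup>2"
proof -
  define v where "v = x - y"
  define n where "n = nrm v"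
  define \<phi> where "\<phi> s = F (y + s *\<^sub>R v) - s * (G y \<bullet> v) - L / 2 * s\<^sup>2 * n\<^sup>2" for s
  define \<phi>' where "\<phi>' t = (\<lambda>s::real. s * (G (y + t *\<^sub>R v) \<bullet> v) - s * (G y \<bullet> v) - s * (L * t * n\<^sup>2))"
    for t
  have "(\<phi> has_derivative \<phi>' t) (at t within {0..1})" if t: "t \<in> {0..1}" for t
  proof -
    have "((\<lambda>s. F (y + s *\<^sub>R v)) has_derivative (\<lambda>s. s * (G (y + t *\<^sub>R v) \<bullet> v)))
        (at t within {0..1})"
      unfolding v_def
      by (rule has_derivative_along_segment[OF cQ Q t der[OF convex_segment_mem[OF cQ Q t]]])
    moreover have "((\<lambda>s. s * (G y \<bullet> v)) has_derivative (\<lambda>s. s * (G y \<bullet> v))) (at t within {0..1})"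
      by (auto intro!: derivative_eq_intros)
    moreover have "((\<lambda>s. L / 2 * s\<^sup>2 * n\<^sup>2) has_derivative (\<lambda>s. s * (L * t * n\<^sup>2))) (at t within {0..1})"
      by (auto intro!: derivative_eq_intros simp: algebra_simps power2_eq_square)
    ultimately show ?thesis
      unfolding \<phi>_def[abs_def] \<phi>'_def by (intro has_derivative_diff)
  qed
  then obtain t where t: "t \<in> {0..1}" and mvt: "\<phi> 1 - \<phi> 0 = \<phi>' t 1"
    using mvt_very_simple[of 0 1 \<phi> \<phi>'] by force
  have tQ: "y + t *\<^sub>R v \<in> Q" using convex_segment_mem[OF cQ Q t] unfolding v_def .
  have "(G (y + t *\<^sub>R v) - G y) \<bullet> v \<le> dual_norm nrm (G (y + t *\<^sub>R v) - G y) * n"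
    unfolding n_def by (rule inner_le_dual_norm[OF nrm])
  also have "\<dots> \<le> L * nrm (t *\<^sub>R v) * n"
    using lip[OF tQ] is_norm_nonneg[OF nrm, of v] unfolding n_def by (intro mult_right_mono) auto
  also have "nrm (t *\<^sub>R v) = t * n" using is_norm_scaleR[OF nrm, of t v] t unfolding n_def by simp
  finally have "(G (y + t *\<^sub>R v) - G y) \<bullet> v \<le> L * t * n\<^sup>2"
    by (simp add: power2_eq_square algebra_simps)
  then have "\<phi> 1 \<le> \<phi> 0" using mvt unfolding \<phi>'_def by (simp add: inner_diff_left)
  then show ?thesis unfolding \<phi>_def v_def n_def by simp
qed

section \<open>Bregman divergence of a prox-function\<close>

lemma prox_function_has_derivative:
  "prox_function nrm Q d gd \<Longrightarrow> y \<in> Q \<Longrightarrow> (d has_derivative (\<lambda>v. gd y \<bullet> v)) (at y within Q)"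
  unfolding prox_function_def by blast

lemma bregman_ge_half_sq:
  assumes P: "prox_function nrm Q d gd" and cQ: "convex Q" and Q: "x \<in> Q" "y \<in> Q"
  shows "(nrm (x - y))\<^sup>2 / 2 \<le> bregman d gd x y"
proof -
  let ?q = "\<lambda>t. d x - d y - (1 - t) / 2 * (nrm (x - y))\<^sup>2"
  have "\<forall>\<^sub>F t in at_right 0. (d (y + t *\<^sub>R (x - y)) - d y) / t \<le> ?q t"
  proof (rule eventually_at_right_0_unit)
    fix t :: real assume t: "0 < t" "t < 1"
    have "y + t *\<^sub>R (x - y) = t *\<^sub>R x + (1 - t) *\<^sub>R y" by (simp add: algebra_simps)
    then have "d (y + t *\<^sub>R (x - y)) \<le> t * d x + (1 - t) * d y - t * (1 - t) / 2 * (nrm (x - y))\<^sup>2"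
      using P Q t unfolding prox_function_def by auto
    then show "(d (y + t *\<^sub>R (x - y)) - d y) / t \<le> ?q t"
      using t by (simp add: field_simps)
  qed
  moreover have "(?q \<longlongrightarrow> ?q 0) (at_right 0)" by (intro tendsto_intros) simp_all
  ultimately have "gd y \<bullet> (x - y) \<le> ?q 0"
    by (intro tendsto_le[OF trivial_limit_at_right_real _
          tendsto_difference_quotient_along_segment[OF cQ Q prox_function_has_derivative[OF P Q(2)]]])
  then show ?thesis unfolding bregman_def by simp
qed

lemma bregman_nonneg:
  "prox_function nrm Q d gd \<Longrightarrow> convex Q \<Longrightarrow> x \<in> Q \<Longrightarrow> y \<in> Q \<Longrightarrow> 0 \<le> bregman d gd x y"
  using bregman_ge_half_sq by (smt (verit) zero_le_power2 divide_nonneg_pos)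

lemma bregman_prox_step_three_point:
  assumes P: "prox_function nrm Q d gd" and cQ: "convex Q" and Q: "x \<in> Q" "w \<in> Q"
    and a: "0 \<le> a" and cv: "convex_on Q \<psi>"
    and am: "is_argmin_on Q (\<lambda>z. bregman d gd z w + a * \<psi> z) u"
  shows "a * \<psi> u + bregman d gd u w + bregman d gd x u \<le> a * \<psi> x + bregman d gd x w"
proof -
  have u: "u \<in> Q"
    and min: "\<And>z. z \<in> Q \<Longrightarrow> bregman d gd u w + a * \<psi> u \<le> bregman d gd z w + a * \<psi> z"
    using am unfolding is_argmin_on_def by auto
  have "\<forall>\<^sub>F t in at_right 0. gd w \<bullet> (x - u) - a * (\<psi> x - \<psi> u) \<le> (d (u + t *\<^sub>R (x - u)) - d u) / t"
  proof (rule eventually_at_right_0_unit)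
    fix t :: real assume t: "0 < t" "t < 1"
    define z where "z = u + t *\<^sub>R (x - u)"
    have zQ: "z \<in> Q" unfolding z_def using convex_segment_mem[OF cQ Q(1) u, of t] t by auto
    have "z = (1 - t) *\<^sub>R u + t *\<^sub>R x" unfolding z_def by (simp add: algebra_simps)
    then have "\<psi> z \<le> (1 - t) * \<psi> u + t * \<psi> x" using convex_onD[OF cv, of t u x] t Q u by simp
    then have "a * (\<psi> z - \<psi> u) \<le> a * (t * (\<psi> x - \<psi> u))"
      using a by (intro mult_left_mono) (auto simp: algebra_simps)
    moreover have "0 \<le> d z - d u - gd w \<bullet> (z - u) + a * (\<psi> z - \<psi> u)"
      using min[OF zQ] unfolding bregman_def by (simp add: inner_diff_right algebra_simps)
    moreover have "gd w \<bullet> (z - u) = t * (gd w \<bullet> (x - u))" unfolding z_def by simp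
    ultimately have "t * (gd w \<bullet> (x - u) - a * (\<psi> x - \<psi> u)) \<le> d z - d u"
      by (simp add: algebra_simps)
    then show "gd w \<bullet> (x - u) - a * (\<psi> x - \<psi> u) \<le> (d (u + t *\<^sub>R (x - u)) - d u) / t"
      using t unfolding z_def by (simp add: field_simps)
  qed
  then have "gd w \<bullet> (x - u) - a * (\<psi> x - \<psi> u) \<le> gd u \<bullet> (x - u)"
    by (intro tendsto_le[OF trivial_limit_at_right_real
          tendsto_difference_quotient_along_segment[OF cQ Q(1) u prox_function_has_derivative[OF P u]]
          tendsto_const])
  then show ?thesis unfolding bregman_def by (simp add: inner_diff_right algebra_simps)
qed

section \<open>One step of the method\<close>

lemma alpha_of_ge_inverse: "0 < Lt \<Longrightarrow> 0 \<le> A \<Longrightarrow> 1 / Lt \<le> alpha_of Lt A"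
  unfolding alpha_of_def by (simp add: field_simps)

lemma alpha_of_root:
  assumes "0 < Lt" "0 \<le> A"
  shows "Lt * (alpha_of Lt A)\<^sup>2 = A + alpha_of Lt A"
proof -
  have "(sqrt (1 + 4 * Lt * A))\<^sup>2 = 1 + 4 * Lt * A" using assms by simp
  then show ?thesis unfolding alpha_of_def using assms by (simp add: field_simps power2_eq_square)
qed

text \<open>
  With trial constant at most \<open>2L\<close>, the recursion \<open>A' = A + \<alpha>\<close>, \<open>Lt \<alpha>\<^sup>2 = A'\<close> takes the bound
  \<open>A \<ge> (c\<^sup>2 - 1) / (8L)\<close> to \<open>A' \<ge> (c + 1)\<^sup>2 / (8L)\<close>: the root \<open>\<alpha>\<close> dominates \<open>(c + 1) / (4L)\<close>,
  the root of the same equation for the smallest admissible \<open>A\<close> and the largest \<open>Lt\<close>.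
\<close>

lemma alpha_of_growth:
  assumes Lt: "0 < Lt" "Lt \<le> 2 * L" and A: "0 \<le> A" "(c\<^sup>2 - 1) / (8 * L) \<le> A" and c: "1 \<le> c"
  shows "(c + 1)\<^sup>2 / (8 * L) \<le> A + alpha_of Lt A"
proof -
  define a where "a = alpha_of Lt A"
  define b where "b = (1 + c) / (4 * L)"
  have L: "0 < L" using Lt by simp
  have "1 \<le> Lt * a" using alpha_of_ge_inverse[OF Lt(1) A(1)] Lt(1) unfolding a_def
    by (simp add: field_simps)
  moreover have "0 < Lt * b" unfolding b_def using L c Lt by simp
  moreover have "Lt * b\<^sup>2 \<le> 2 * L * b\<^sup>2" using Lt by (intro mult_right_mono) auto
  moreover have "2 * L * b\<^sup>2 - b = (c\<^sup>2 - 1) / (8 * L)"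
    unfolding b_def using L by (simp add: field_simps power2_eq_square)
  moreover have "Lt * a\<^sup>2 = A + a" using alpha_of_root[OF Lt(1) A(1)] unfolding a_def .
  moreover have "(b - a) * (Lt * (b + a) - 1) = (Lt * b\<^sup>2 - b) - (Lt * a\<^sup>2 - a)"
    by (simp add: algebra_simps power2_eq_square)
  ultimately have "b \<le> a" using A
    by (smt (verit, best) mult_pos_pos distrib_left)
  moreover have "(c + 1)\<^sup>2 / (8 * L) = (c\<^sup>2 - 1) / (8 * L) + b"
    unfolding b_def using L by (simp add: field_simps power2_eq_square)
  ultimately show ?thesis using A unfolding a_def by linarith
qed

lemma mtm_step_props:
  assumes st: "mtm_step Q M f g h V Lt Ak xk uk a A' y' u' x'"
    and Lt: "0 < Lt" and Ak: "0 \<le> Ak" and cQ: "convex Q" and Q: "xk \<in> Q" "uk \<in> Q"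
  shows "0 < a" "A' = Ak + a" "Lt * a\<^sup>2 = A'"
    and "y' = (a / A') *\<^sub>R uk + (Ak / A') *\<^sub>R xk" "x' = (a / A') *\<^sub>R u' + (Ak / A') *\<^sub>R xk"
    and "is_argmin_on Q (\<lambda>z. V z uk + a * (lin_max M f g y' z + h z)) u'"
    and "y' \<in> Q" "u' \<in> Q" "x' \<in> Q"
proof -
  have a: "a = alpha_of Lt Ak" and A': "A' = Ak + a"
    and y': "y' = (1 / A') *\<^sub>R (a *\<^sub>R uk + Ak *\<^sub>R xk)"
    and am: "is_argmin_on Q (\<lambda>z. V z uk + a * (lin_max M f g y' z + h z)) u'"
    and x': "x' = (1 / A') *\<^sub>R (a *\<^sub>R u' + Ak *\<^sub>R xk)"
    using st unfolding mtm_step_def by auto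
  show a0: "0 < a" using alpha_of_ge_inverse[OF Lt Ak] Lt unfolding a
    by (smt (verit) divide_pos_pos)
  show "A' = Ak + a" "Lt * a\<^sup>2 = A'" using A' alpha_of_root[OF Lt Ak] a by auto
  show u': "u' \<in> Q" using am unfolding is_argmin_on_def by simp
  show y'': "y' = (a / A') *\<^sub>R uk + (Ak / A') *\<^sub>R xk" unfolding y' by (simp add: scaleR_add_right)
  show x'': "x' = (a / A') *\<^sub>R u' + (Ak / A') *\<^sub>R xk" unfolding x' by (simp add: scaleR_add_right)
  show "is_argmin_on Q (\<lambda>z. V z uk + a * (lin_max M f g y' z + h z)) u'" using am .
  have "a / A' + Ak / A' = 1" "0 \<le> a / A'" "0 \<le> Ak / A'"
    using A' a0 Ak by (auto simp: add_divide_distrib[symmetric])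
  then show "y' \<in> Q" "x' \<in> Q"
    unfolding y'' x'' using convexD[OF cQ Q(2) Q(1)] convexD[OF cQ u' Q(1)] by auto
qed

lemma lin_max_ge: "1 \<le> M \<Longrightarrow> j \<in> {1..M} \<Longrightarrow> f j y + g j y \<bullet> (x - y) \<le> lin_max M f g y x"
  unfolding lin_max_def by (rule Max_ge) auto

lemma lin_max_le:
  "1 \<le> M \<Longrightarrow> (\<And>j. j \<in> {1..M} \<Longrightarrow> f j y + g j y \<bullet> (x - y) \<le> c) \<Longrightarrow> lin_max M f g y x \<le> c"
  unfolding lin_max_def by (subst Max_le_iff) auto

lemma convex_on_lin_max:
  assumes M: "1 \<le> M" and cQ: "convex Q"
  shows "convex_on Q (lin_max M f g y)"
  unfolding convex_on_def
proof (intro conjI cQ ballI allI impI)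
  fix u v :: real and p q
  assume uv: "0 \<le> u" "0 \<le> v" "u + v = 1"
  show "lin_max M f g y (u *\<^sub>R p + v *\<^sub>R q) \<le> u * lin_max M f g y p + v * lin_max M f g y q"
  proof (rule lin_max_le[OF M])
    fix j assume j: "j \<in> {1..M}"
    have "f j y + g j y \<bullet> (u *\<^sub>R p + v *\<^sub>R q - y)
        = u * (f j y + g j y \<bullet> (p - y)) + v * (f j y + g j y \<bullet> (q - y))"
      using uv(3) by (simp add: algebra_simps inner_add_right inner_diff_right flip: distrib_right)
    also have "\<dots> \<le> u * lin_max M f g y p + v * lin_max M f g y q"
      using lin_max_ge[OF M j, of f y g] uv by (intro add_mono mult_left_mono) auto
    finally show "f j y + g j y \<bullet> (u *\<^sub>R p + v *\<^sub>R q - y) \<le> \<dots>" .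
  qed
qed

locale minimax_problem =
  fixes nrm :: "'a::euclidean_space \<Rightarrow> real" and Q :: "'a set" and M :: nat
    and f :: "nat \<Rightarrow> 'a \<Rightarrow> real" and g :: "nat \<Rightarrow> 'a \<Rightarrow> 'a" and h :: "'a \<Rightarrow> real"
    and d :: "'a \<Rightarrow> real" and gd :: "'a \<Rightarrow> 'a"
  assumes norm: "is_norm nrm"
    and convex_Q: "convex Q"
    and M: "1 \<le> M"
    and fconv: "\<And>i. i \<in> {1..M} \<Longrightarrow> convex_on Q (f i)"
    and fdiff: "\<And>i x. i \<in> {1..M} \<Longrightarrow> x \<in> Q \<Longrightarrow> (f i has_derivative (\<lambda>v. g i x \<bullet> v)) (at x within Q)"
    and hconv: "convex_on Q h"
    and prox: "prox_function nrm Q d gd"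
begin

lemma lin_max_add_le_obj:
  assumes "x \<in> Q" "y \<in> Q"
  shows "lin_max M f g y x + h x \<le> obj M f h x"
proof -
  have "lin_max M f g y x \<le> Max ((\<lambda>i. f i x) ` {1..M})"
  proof (rule lin_max_le[OF M])
    fix j assume j: "j \<in> {1..M}"
    have "f j y + g j y \<bullet> (x - y) \<le> f j x"
      by (rule convex_on_gradient_inequality[OF assms fconv[OF j] fdiff[OF j assms(2)]])
    also have "\<dots> \<le> Max ((\<lambda>i. f i x) ` {1..M})" using j by (intro Max_ge) auto
    finally show "f j y + g j y \<bullet> (x - y) \<le> Max ((\<lambda>i. f i x) ` {1..M})" .
  qed
  then show ?thesis unfolding obj_def by simp
qed

lemma mtm_accept_if_Lipschitz:
  assumes Q: "x' \<in> Q" "y' \<in> Q" and L: "0 \<le> L" "L \<le> Lt"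
    and flip: "\<And>i x z. i \<in> {1..M} \<Longrightarrow> x \<in> Q \<Longrightarrow> z \<in> Q \<Longrightarrow>
                 dual_norm nrm (g i x - g i z) \<le> L * nrm (x - z)"
  shows "mtm_accept nrm M f g h Lt y' x'"
proof -
  have "f j x' \<le> lin_max M f g y' x' + Lt / 2 * (nrm (x' - y'))\<^sup>2" if j: "j \<in> {1..M}" for j
  proof -
    have "f j x' \<le> f j y' + g j y' \<bullet> (x' - y') + L / 2 * (nrm (x' - y'))\<^sup>2"
      by (rule descent_lemma[OF norm convex_Q Q]) (use fdiff[OF j] flip[OF j _ Q(2)] in auto)
    also have "\<dots> \<le> lin_max M f g y' x' + Lt / 2 * (nrm (x' - y'))\<^sup>2"
      using lin_max_ge[OF M j, of f y' g x'] L by (intro add_mono mult_right_mono) auto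
    finally show ?thesis .
  qed
  then have "Max ((\<lambda>i. f i x') ` {1..M}) \<le> lin_max M f g y' x' + Lt / 2 * (nrm (x' - y'))\<^sup>2"
    using M by (subst Max_le_iff) auto
  then show ?thesis unfolding mtm_accept_def obj_def by linarith
qed

lemma mtm_step_potential:
  assumes st: "mtm_step Q M f g h (bregman d gd) Lt Ak xk uk a A' y' u' x'"
    and acc: "mtm_accept nrm M f g h Lt y' x'"
    and Lt: "0 < Lt" and Ak: "0 \<le> Ak" and Q: "xk \<in> Q" "uk \<in> Q" and z: "z \<in> Q"
  shows "A' * obj M f h x' + bregman d gd z u'
    \<le> Ak * obj M f h xk + a * obj M f h z + bregman d gd z uk"
proof -
  note step = mtm_step_props[OF st Lt Ak convex_Q Q]
  define \<psi> where "\<psi> w = lin_max M f g y' w + h w" for w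
  define t where "t = a / A'"
  have A': "0 < A'" "A' * t = a" "A' * (1 - t) = Ak"
    using step(1,2) Ak unfolding t_def by (auto simp: field_simps)
  have t: "0 \<le> t" "t \<le> 1" using A' Ak step(1,2) by (auto simp: t_def field_simps)
  have cv: "convex_on Q \<psi>"
    unfolding \<psi>_def[abs_def] by (intro convex_on_add convex_on_lin_max M convex_Q hconv)
  have "x' = (1 - t) *\<^sub>R xk + t *\<^sub>R u'"
    unfolding step(5) using A' step(2) by (simp add: t_def field_simps)
  then have "A' * \<psi> x' \<le> A' * ((1 - t) * \<psi> xk + t * \<psi> u')"
    using convex_onD[OF cv t Q(1) step(8)] A' by (intro mult_left_mono) auto
  also have "\<dots> \<le> Ak * obj M f h xk + a * \<psi> u'"
    using A' mult_left_mono[OF lin_max_add_le_obj[OF Q(1) step(7)] Ak]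
    unfolding \<psi>_def by (simp add: distrib_left mult.assoc[symmetric])
  finally have model: "A' * \<psi> x' \<le> Ak * obj M f h xk + a * \<psi> u'" .
  have "x' - y' = t *\<^sub>R (u' - uk)" unfolding step(4,5) t_def by (simp add: algebra_simps)
  then have "nrm (x' - y') = a / A' * nrm (u' - uk)"
    using is_norm_scaleR[OF norm, of t "u' - uk"] t step(1) A'(1) by (simp add: t_def)
  then have "A' * (Lt / 2 * (nrm (x' - y'))\<^sup>2) = (Lt * a\<^sup>2) / A' * (nrm (u' - uk))\<^sup>2 / 2"
    using A'(1) by (simp add: power_mult_distrib power_divide) (simp add: field_simps power2_eq_square)
  also have "\<dots> \<le> bregman d gd u' uk"
    using bregman_ge_half_sq[OF prox convex_Q step(8) Q(2)] step(3) A' by simp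
  finally have quadratic: "A' * (Lt / 2 * (nrm (x' - y'))\<^sup>2) \<le> bregman d gd u' uk" .
  have "a * \<psi> u' + bregman d gd u' uk + bregman d gd z u' \<le> a * \<psi> z + bregman d gd z uk"
    using step(1,6) by (intro bregman_prox_step_three_point[OF prox convex_Q z Q(2) _ cv])
      (auto simp: \<psi>_def)
  moreover have "a * \<psi> z \<le> a * obj M f h z"
    using lin_max_add_le_obj[OF z step(7)] step(1) unfolding \<psi>_def by simp
  moreover have "A' * obj M f h x' \<le> A' * \<psi> x' + A' * (Lt / 2 * (nrm (x' - y'))\<^sup>2)"
  proof -
    have "obj M f h x' \<le> \<psi> x' + Lt / 2 * (nrm (x' - y'))\<^sup>2"
      using acc unfolding mtm_accept_def \<psi>_def by simp
    from mult_left_mono[OF this, of A'] A'(1) show ?thesis by (simp add: algebra_simps)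
  qed
  ultimately show ?thesis using model quadratic by linarith
qed

end

section \<open>Runs of the method\<close>

locale mtm_run_setting = minimax_problem +
  fixes L L0 :: real and N :: nat and x0 :: "'a::euclidean_space"
    and x y u :: "nat \<Rightarrow> 'a" and A alpha Lk :: "nat \<Rightarrow> real"
  assumes flip: "\<And>i x z. i \<in> {1..M} \<Longrightarrow> x \<in> Q \<Longrightarrow> z \<in> Q \<Longrightarrow>
                   dual_norm nrm (g i x - g i z) \<le> L * nrm (x - z)"
    and x0: "x0 \<in> Q"
    and L0: "0 < L0" "L0 \<le> L"
    and run: "mtm_run nrm Q M f g h (bregman d gd) x0 L0 N x y u A alpha Lk"
begin

lemma run_start: "x 0 = x0" "u 0 = x0" "A 0 = 0" "Lk 0 = L0"
  using run unfolding mtm_run_def by auto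

lemma run_accepted_step:
  assumes "k < N"
  shows "mtm_step Q M f g h (bregman d gd) (Lk (Suc k)) (A k) (x k) (u k)
           (alpha (Suc k)) (A (Suc k)) (y (Suc k)) (u (Suc k)) (x (Suc k))"
    and "mtm_accept nrm M f g h (Lk (Suc k)) (y (Suc k)) (x (Suc k))"
  using run assms unfolding mtm_run_def by blast+

text \<open>A rejected trial constant is below \<open>L\<close>, and the accepted one at most doubles it.\<close>

lemma run_constant_le:
  assumes k: "k < N" and Q: "x k \<in> Q" "u k \<in> Q" and Ak: "0 \<le> A k"
    and Lk: "0 < Lk k" "Lk k \<le> 2 * L"
  shows "Lk (Suc k) \<le> 2 * L"
proof -
  obtain m where m: "Lk (Suc k) = Lk k / 2 * 2 ^ m"
    and rejected: "\<forall>j<m. (\<exists>a A' y' u' x'.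
          mtm_step Q M f g h (bregman d gd) (Lk k / 2 * 2 ^ j) (A k) (x k) (u k) a A' y' u' x') \<and>
        (\<forall>a A' y' u' x'.
          mtm_step Q M f g h (bregman d gd) (Lk k / 2 * 2 ^ j) (A k) (x k) (u k) a A' y' u' x'
            \<longrightarrow> \<not> mtm_accept nrm M f g h (Lk k / 2 * 2 ^ j) y' x')"
    using run k unfolding mtm_run_def by blast
  show ?thesis
  proof (cases m)
    case 0
    then show ?thesis using m Lk L0 by simp
  next
    case (Suc j)
    define T where "T = Lk k / 2 * 2 ^ j"
    obtain a A' y' u' x' where st: "mtm_step Q M f g h (bregman d gd) T (A k) (x k) (u k) a A' y' u' x'"
      and not_accepted: "\<not> mtm_accept nrm M f g h T y' x'"
      using rejected Suc unfolding T_def by blast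
    have "0 < T" unfolding T_def using Lk by simp
    note step = mtm_step_props[OF st this Ak convex_Q Q]
    have "T < L"
    proof (rule ccontr)
      assume "\<not> T < L"
      then have "mtm_accept nrm M f g h T y' x'"
        using L0 by (intro mtm_accept_if_Lipschitz[OF step(9,7) _ _ flip]) auto
      with not_accepted show False by contradiction
    qed
    moreover have "Lk (Suc k) = 2 * T" unfolding m T_def Suc by simp
    ultimately show ?thesis by simp
  qed
qed

lemma run_invariants:
  "k \<le> N \<Longrightarrow> x k \<in> Q \<and> u k \<in> Q \<and> 0 \<le> A k \<and> 0 < Lk k \<and> Lk k \<le> 2 * L"
proof (induction k)
  case 0
  then show ?case using run_start x0 L0 by auto
next
  case (Suc k)
  then have k: "k < N" and IH: "x k \<in> Q" "u k \<in> Q" "0 \<le> A k" "0 < Lk k" "Lk k \<le> 2 * L"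
    by auto
  obtain m where m: "Lk (Suc k) = Lk k / 2 * 2 ^ m" using run k unfolding mtm_run_def by blast
  have Lk': "0 < Lk (Suc k)" unfolding m using IH(4) by simp
  note step = mtm_step_props[OF run_accepted_step(1)[OF k] Lk' IH(3) convex_Q IH(1,2)]
  show ?case
    using step(1,2,8,9) IH(3) Lk' run_constant_le[OF k IH] by auto
qed

lemma run_potential_le:
  assumes z: "z \<in> Q"
  shows "k \<le> N \<Longrightarrow> A k * obj M f h (x k) + bregman d gd z (u k) \<le> A k * obj M f h z + bregman d gd z x0"
proof (induction k)
  case 0
  then show ?case using run_start by simp
next
  case (Suc k)
  then have k: "k < N" by simp
  have I: "x k \<in> Q" "u k \<in> Q" "0 \<le> A k" "0 < Lk (Suc k)"
    using run_invariants[of k] run_invariants[of "Suc k"] k by auto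
  note st = run_accepted_step[OF k]
  have "A (Suc k) * obj M f h (x (Suc k)) + bregman d gd z (u (Suc k))
      \<le> A k * obj M f h (x k) + alpha (Suc k) * obj M f h z + bregman d gd z (u k)"
    by (rule mtm_step_potential[OF st I(4,3,1,2) z])
  also have "\<dots> \<le> (A k + alpha (Suc k)) * obj M f h z + bregman d gd z x0"
    using Suc k by (simp add: algebra_simps)
  finally show ?case using mtm_step_props(2)[OF st(1) I(4,3) convex_Q I(1,2)] by simp
qed

lemma run_A_ge:
  "Suc k \<le> N \<Longrightarrow> (real k + 2)\<^sup>2 / (8 * L) \<le> A (Suc k)"
proof (induction k)
  case 0
  have "Lk 1 \<le> 2 * L" "0 < Lk 1" using run_invariants[of 1] 0 by auto
  moreover have "A 1 = A 0 + alpha_of (Lk 1) (A 0)"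
    using run_accepted_step(1)[of 0] 0 unfolding mtm_step_def by simp
  ultimately show ?case using alpha_of_growth[of "Lk 1" L "A 0" 1] run_start by simp
next
  case (Suc k)
  then have k: "Suc k < N" by simp
  have I: "0 \<le> A (Suc k)" "0 < Lk (Suc (Suc k))" "Lk (Suc (Suc k)) \<le> 2 * L"
    using run_invariants[of "Suc k"] run_invariants[of "Suc (Suc k)"] k by auto
  then have "((real k + 2)\<^sup>2 - 1) / (8 * L) \<le> (real k + 2)\<^sup>2 / (8 * L)"
    by (intro divide_right_mono) auto
  then have "((real k + 2)\<^sup>2 - 1) / (8 * L) \<le> A (Suc k)"
    using Suc k by simp
  moreover have "A (Suc (Suc k)) = A (Suc k) + alpha_of (Lk (Suc (Suc k))) (A (Suc k))"
    using run_accepted_step(1)[OF k] unfolding mtm_step_def by simp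
  ultimately show ?case
    using alpha_of_growth[OF I(2,3) I(1), of "real k + 2"] by (simp add: add_ac)
qed

end

theorem theorem2:
  fixes nrm :: "'a::euclidean_space \<Rightarrow> real"
    and Q :: "'a set" and M :: nat
    and f :: "nat \<Rightarrow> 'a \<Rightarrow> real" and g :: "nat \<Rightarrow> 'a \<Rightarrow> 'a" and h :: "'a \<Rightarrow> real"
    and d :: "'a \<Rightarrow> real" and gd :: "'a \<Rightarrow> 'a"
    and L L0 R :: real and N :: nat and x0 xs :: 'a
    and x y u :: "nat \<Rightarrow> 'a" and A alpha Lk :: "nat \<Rightarrow> real"
  assumes norm: "is_norm nrm"
    and Q: "closed Q" "convex Q"
    and M: "M \<ge> 1"
    and fconv: "\<And>i. i \<in> {1..M} \<Longrightarrow> convex_on Q (f i)"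
    and fdiff: "\<And>i x. i \<in> {1..M} \<Longrightarrow> x \<in> Q \<Longrightarrow> (f i has_derivative (\<lambda>v. g i x \<bullet> v)) (at x within Q)"
    and flip: "\<And>i x z. i \<in> {1..M} \<Longrightarrow> x \<in> Q \<Longrightarrow> z \<in> Q \<Longrightarrow>
                 dual_norm nrm (g i x - g i z) \<le> L * nrm (x - z)"
    and hconv: "convex_on Q h"
    and xs: "xs \<in> Q" "\<And>x. x \<in> Q \<Longrightarrow> obj M f h xs \<le> obj M f h x"
    and prox: "prox_function nrm Q d gd"
    and x0: "x0 \<in> Q"
    and R: "bregman d gd xs x0 \<le> R\<^sup>2"
    and N: "N \<ge> 1"
    and L0: "0 < L0" "L0 \<le> L"
    and run: "mtm_run nrm Q M f g h (bregman d gd) x0 L0 N x y u A alpha Lk"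
  shows "obj M f h (x N) - obj M f h xs \<le> 8 * L * R\<^sup>2 / (real N + 1)\<^sup>2"
proof -
  interpret mtm_run_setting nrm Q M f g h d gd L L0 N x0 x y u A alpha Lk
    using norm Q(2) M fconv fdiff hconv prox flip x0 L0 run by unfold_locales
  obtain n where n: "N = Suc n" using N by (cases N) auto
  have L: "0 < L" using L0 by simp
  have AN: "(real N + 1)\<^sup>2 / (8 * L) \<le> A N" using run_A_ge[of n] n by (simp add: add_ac)
  then have AN_pos: "0 < A N" using L by (smt (verit) divide_pos_pos zero_less_power2 of_nat_0_le_iff)
  have "0 \<le> bregman d gd xs (u N)"
    using bregman_nonneg[OF prox convex_Q xs(1)] run_invariants[of N] by simp
  then have "A N * (obj M f h (x N) - obj M f h xs) \<le> R\<^sup>2"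
    using run_potential_le[OF xs(1) order_refl] R by (simp add: algebra_simps)
  then have "obj M f h (x N) - obj M f h xs \<le> R\<^sup>2 / A N"
    using AN_pos by (simp add: field_simps)
  also have "\<dots> \<le> R\<^sup>2 / ((real N + 1)\<^sup>2 / (8 * L))"
    by (rule divide_left_mono[OF AN]) (use L AN_pos in auto)
  finally show ?thesis by (simp add: ac_simps)
qed

end
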